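(* Let $\gamma>0$. For every $x\in\mathbb R^n$ and every $T>0$, $$V_\gamma(x)=\sup_{\lambda\in\Lambda}\inf_{\mathrm u\in\mathbb U}\min\Bigl\{\min_{t\in[0,T]}\max\bigl[e^{-\gamma t}\ell(\xi(t)),\ \max_{s\in[0,t]}e^{-\gamma s}c(\xi(s))\bigr],\ \max\bigl[e^{-\gamma T}V_\gamma(\xi(T)),\ \max_{t\in[0,T]}e^{-\gamma t}c(\xi(t))\bigr]\Bigr\},$$ where $\xi=\xi_x^{\mathrm u,\lambda[\mathrm u]}$.
   Context: Consider the system $\dot x(t)=f(x(t),\mathrm u(t),\mathrm d(t))$ for $t\ge 0$, $x(0)=x$, where $U\subset\mathbb R^{m_u}$ and $D\subset\mathbb R^{m_d}$ are compact convex sets and $f:\mathbb R^n\times U\times D\to\mathbb R^n$ is uniformly continuous, bounded, and Lipschitz continuous in $x$ uniformly in $(u,d)$ (time-invariant). Let $\mathbb U$ (resp. $\mathbb D$) be the set of Lebesgue measurable maps $[0,\infty)\to U$ (resp. $[0,\infty)\to D$). Let $\Lambda$ be the set of non-anticipative strategies $\lambda:\mathbb U\to\mathbb D$, i.e. for every $t\ge0$, if $\mathrm u(s)=\mathrm u'(s)$ for a.e. $s\in[0,t]$ then $\lambda[\mathrm u](s)=\lambda[\mathrm u'](s)$ for a.e. $s\in[0,t]$. For $x\in\mathbb R^n$, $\mathrm u\in\mathbb U$, $\mathrm d\in\mathbb D$, $\xi_x^{\mathrm u,\mathrm d}(\cdot)$ denotes the unique solution of the system; inside $\sup_\lambda\inf_{\mathrm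 u}$ expressions, $\xi(\cdot)$ abbreviates $\xi_x^{\mathrm u,\lambda[\mathrm u]}(\cdot)$. Let $\ell,c:\mathbb R^n\to\mathbb R$ be bounded and Lipschitz continuous. For $\gamma>0$ define the discounted reach-avoid value function $$V_\gamma(x):=\sup_{\lambda\in\Lambda}\inf_{\mathrm u\in\mathbb U}\inf_{t\in[0,\infty)}\max\Bigl\{e^{-\gamma t}\ell(\xi(t)),\ \max_{s\in[0,t]}e^{-\gamma s}c(\xi(s))\Bigr\}.$$ *)

theory Defs
  imports "HOL-Analysis.Analysis"
begin

definition signals :: "'a::euclidean_space set \<Rightarrow> (real \<Rightarrow> 'a) set" where
  "signals A = {w. w \<in> borel_measurable (lebesgue_on {0..}) \<and> (\<forall>t\<ge>0. w t \<in> A)}"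

definition nonanticipative_strategies ::
  "'u::euclidean_space set \<Rightarrow> 'd::euclidean_space set \<Rightarrow> ((real \<Rightarrow> 'u) \<Rightarrow> (real \<Rightarrow> 'd)) set" where
  "nonanticipative_strategies U D =
     {lam. (\<forall>u\<in>signals U. lam u \<in> signals D) \<and>
           (\<forall>t\<ge>0. \<forall>u\<in>signals U. \<forall>u'\<in>signals U.
              (AE s in lebesgue_on {0..t}. u s = u' s) \<longrightarrow>
              (AE s in lebesgue_on {0..t}. lam u s = lam u' s))}"

text \<open>The (Caratheodory) solution of x' = f(x,u,d), x(0) = x on [0,inf),
  extended by the constant x for negative times (to make it unique).\<close>
definition traj ::
  "('n::euclidean_space \<Rightarrow> 'u \<Rightarrow> 'd \<Rightarrow> 'n) \<Rightarrow> 'n \<Rightarrow> (real \<Rightarrow> 'u) \<Rightarrow> (real \<Rightarrow> 'd) \<Rightarrow> real \<Rightarrow> 'n" where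
  "traj f x u d = (THE \<xi>. (\<forall>t<0. \<xi> t = x) \<and>
      (\<forall>t\<ge>0. ((\<lambda>s. f (\<xi> s) (u s) (d s)) has_integral (\<xi> t - x)) {0..t}))"

definition ra_payoff ::
  "real \<Rightarrow> ('n \<Rightarrow> real) \<Rightarrow> ('n \<Rightarrow> real) \<Rightarrow> (real \<Rightarrow> 'n) \<Rightarrow> real \<Rightarrow> real" where
  "ra_payoff \<gamma> l c \<xi> t =
     max (exp (- \<gamma> * t) * l (\<xi> t)) (SUP s\<in>{0..t}. exp (- \<gamma> * s) * c (\<xi> s))"

definition V_gamma ::
  "('n::euclidean_space \<Rightarrow> 'u::euclidean_space \<Rightarrow> 'd::euclidean_space \<Rightarrow> 'n) \<Rightarrow> 'u set \<Rightarrow> 'd set \<Rightarrow>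
   ('n \<Rightarrow> real) \<Rightarrow> ('n \<Rightarrow> real) \<Rightarrow> real \<Rightarrow> 'n \<Rightarrow> real" where
  "V_gamma f U D l c \<gamma> x =
     (SUP lam\<in>nonanticipative_strategies U D. INF u\<in>signals U. INF t\<in>{0..}.
        ra_payoff \<gamma> l c (traj f x u (lam u)) t)"

end

theory Submission
  imports Defs
begin

(*
  Trajectories are the unique Caratheodory solutions of the state equation
  (Picard iteration, Gronwall's lemma), so concatenating the inputs at T concatenates the
  trajectories, and the running payoff at time T + r is the maximum of the discounted constraint
  term up to T and exp(-gamma T) times the running payoff at time r of the game restarted from the
  state reached.  Hence the total payoff is H z, with z the total payoff of the restarted game and
  H z = min A (max (exp(-gamma T) z) C) monotone and continuous, so that H commutes with infima.
  Against a strategy lam, continuing a control u by v after T leaves the opponent the shifted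
  strategy v |-> lam (u ++ v) (T + .), which gives V <= right-hand side; conversely, gluing to lam
  at time T an epsilon-optimal strategy for the state reached gives right-hand side - epsilon <= V.
*)

section \<open>Signals and non-anticipative strategies\<close>

lemma signals_iff_indicator_measurable:
  "w \<in> signals A \<longleftrightarrow>
     (\<lambda>s. indicator {0..} s *\<^sub>R w s) \<in> borel_measurable lebesgue \<and> (\<forall>t\<ge>0. w t \<in> A)"
proof -
  have "w \<in> borel_measurable (lebesgue_on {0..}) \<longleftrightarrow>
      (\<lambda>s. indicator {0..} s *\<^sub>R w s) \<in> borel_measurable lebesgue"
    by (rule borel_measurable_restrict_space_iff) auto
  then show ?thesis unfolding signals_def by blast
qed

lemma signals_memD: "w \<in> signals A \<Longrightarrow> s \<ge> 0 \<Longrightarrow> w s \<in> A"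
  unfolding signals_def by blast

lemma const_signal: "a \<in> A \<Longrightarrow> (\<lambda>s. a) \<in> signals A"
  unfolding signals_def by auto

lemma borel_measurable_lebesgue_translate:
  fixes g :: "real \<Rightarrow> 'a::euclidean_space"
  assumes "g \<in> borel_measurable lebesgue"
  shows "(\<lambda>s. g (a + s)) \<in> borel_measurable lebesgue"
proof -
  have "(\<lambda>s::real. a + (\<Sum>j\<in>Basis. (1 * (s \<bullet> j)) *\<^sub>R j)) \<in> lebesgue \<rightarrow>\<^sub>M lebesgue"
    by (rule lebesgue_affine_measurable) auto
  then have "(\<lambda>s::real. a + s) \<in> lebesgue \<rightarrow>\<^sub>M lebesgue" by simp
  from measurable_compose[OF this assms] show ?thesis by (simp add: o_def)
qed

definition shift_signal :: "real \<Rightarrow> (real \<Rightarrow> 'a) \<Rightarrow> real \<Rightarrow> 'a" where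
  "shift_signal T u = (\<lambda>r. u (T + r))"

definition concat_signal :: "real \<Rightarrow> (real \<Rightarrow> 'a) \<Rightarrow> (real \<Rightarrow> 'a) \<Rightarrow> real \<Rightarrow> 'a" where
  "concat_signal T u v = (\<lambda>s. if s \<le> T then u s else v (s - T))"

lemma concat_signal_shift_signal [simp]: "concat_signal T u (shift_signal T u) = u"
  by (auto simp: concat_signal_def shift_signal_def)

lemma shift_signal_signals:
  assumes "w \<in> signals A" "T \<ge> 0"
  shows "shift_signal T w \<in> signals A"
proof -
  define w0 where "w0 = (\<lambda>s. indicator {0..} s *\<^sub>R w s)"
  have "w0 \<in> borel_measurable lebesgue"
    using assms(1) unfolding signals_iff_indicator_measurable w0_def by blast
  then have "(\<lambda>s. indicator {0..} s *\<^sub>R w0 (T + s)) \<in> borel_measurable lebesgue"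
    by (intro borel_measurable_scaleR borel_measurable_indicator borel_measurable_lebesgue_translate) auto
  moreover have "(\<lambda>s. indicator {0..} s *\<^sub>R w0 (T + s)) = (\<lambda>s. indicator {0..} s *\<^sub>R shift_signal T w s)"
    using assms(2) by (auto simp: indicator_def shift_signal_def w0_def)
  moreover have "shift_signal T w t \<in> A" if "t \<ge> 0" for t
    using assms that by (simp add: shift_signal_def signals_memD)
  ultimately show ?thesis
    unfolding signals_iff_indicator_measurable by simp
qed

lemma concat_signal_signals:
  assumes "u \<in> signals A" "v \<in> signals A" "T \<ge> 0"
  shows "concat_signal T u v \<in> signals A"
proof -
  define u0 where "u0 = (\<lambda>s. indicator {0..} s *\<^sub>R u s)"
  define v0 where "v0 = (\<lambda>s. indicator {0..} s *\<^sub>R v s)"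
  have "u0 \<in> borel_measurable lebesgue" "v0 \<in> borel_measurable lebesgue"
    using assms(1,2) unfolding signals_iff_indicator_measurable u0_def v0_def by blast+
  then have "(\<lambda>s. indicator {0..T} s *\<^sub>R u0 s + indicator {T<..} s *\<^sub>R v0 (- T + s))
      \<in> borel_measurable lebesgue"
    by (intro borel_measurable_add borel_measurable_scaleR borel_measurable_indicator
        borel_measurable_lebesgue_translate) auto
  moreover have "(\<lambda>s. indicator {0..T} s *\<^sub>R u0 s + indicator {T<..} s *\<^sub>R v0 (- T + s)) =
      (\<lambda>s. indicator {0..} s *\<^sub>R concat_signal T u v s)"
    using assms(3) by (auto simp: indicator_def concat_signal_def u0_def v0_def)
  moreover have "concat_signal T u v t \<in> A" if "t \<ge> 0" for t
    using assms that by (simp add: concat_signal_def signals_memD)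
  ultimately show ?thesis
    unfolding signals_iff_indicator_measurable by simp
qed

definition ae_eq_upto :: "real \<Rightarrow> (real \<Rightarrow> 'a) \<Rightarrow> (real \<Rightarrow> 'a) \<Rightarrow> bool" where
  "ae_eq_upto t u v \<longleftrightarrow> (\<exists>N. negligible N \<and> (\<forall>s\<in>{0..t} - N. u s = v s))"

lemma AE_lebesgue_on_iff_negligible:
  assumes "S \<in> sets lebesgue"
  shows "(AE s in lebesgue_on S. P s) \<longleftrightarrow> (\<exists>N. negligible N \<and> (\<forall>s\<in>S - N. P s))"
proof -
  have "(AE s in lebesgue_on S. P s) \<longleftrightarrow> (AE s in lebesgue. s \<in> S \<longrightarrow> P s)"
    by (rule AE_restrict_space_iff) (use assms in auto)
  also have "\<dots> \<longleftrightarrow> (\<exists>N. negligible N \<and> (\<forall>s\<in>S - N. P s))"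
    unfolding eventually_ae_filter negligible_iff_null_sets by auto
  finally show ?thesis .
qed

lemma ae_eq_upto_iff_AE: "ae_eq_upto t u v \<longleftrightarrow> (AE s in lebesgue_on {0..t}. u s = v s)"
  unfolding ae_eq_upto_def by (simp add: AE_lebesgue_on_iff_negligible)

lemma ae_eq_uptoI: "(\<And>s. s \<in> {0..t} \<Longrightarrow> u s = v s) \<Longrightarrow> ae_eq_upto t u v"
  unfolding ae_eq_upto_def by (intro exI[of _ "{}"]) auto

lemma ae_eq_upto_nonpos: "t \<le> 0 \<Longrightarrow> ae_eq_upto t u v"
  unfolding ae_eq_upto_def by (intro exI[of _ "{0}"]) auto

lemma ae_eq_upto_mono: "ae_eq_upto t u v \<Longrightarrow> t' \<le> t \<Longrightarrow> ae_eq_upto t' u v"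
  unfolding ae_eq_upto_def by fastforce

lemma ae_eq_upto_shift:
  assumes "ae_eq_upto (T + t) u v" "T \<ge> 0"
  shows "ae_eq_upto t (shift_signal T u) (shift_signal T v)"
proof -
  obtain N where N: "negligible N" "\<forall>s\<in>{0..T + t} - N. u s = v s"
    using assms(1) unfolding ae_eq_upto_def by blast
  have "shift_signal T u r = shift_signal T v r" if "r \<in> {0..t} - (+) (- T) ` N" for r
  proof -
    have "T + r \<notin> N"
      using that image_eqI[of r "(+) (- T)" "T + r" N] by auto
    then show ?thesis using N(2) that assms(2) by (auto simp: shift_signal_def)
  qed
  then show ?thesis
    unfolding ae_eq_upto_def using negligible_translation[OF N(1)] by blast
qed

lemma ae_eq_upto_concat:
  assumes "ae_eq_upto (min t T) u u'" "ae_eq_upto (t - T) v v'"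
  shows "ae_eq_upto t (concat_signal T u v) (concat_signal T u' v')"
proof -
  obtain N1 where N1: "negligible N1" "\<forall>s\<in>{0..min t T} - N1. u s = u' s"
    using assms(1) unfolding ae_eq_upto_def by blast
  obtain N2 where N2: "negligible N2" "\<forall>r\<in>{0..t - T} - N2. v r = v' r"
    using assms(2) unfolding ae_eq_upto_def by blast
  have "concat_signal T u v s = concat_signal T u' v' s" if "s \<in> {0..t} - (N1 \<union> (+) T ` N2)" for s
  proof (cases "s \<le> T")
    case True
    then show ?thesis using N1(2) that by (auto simp: concat_signal_def)
  next
    case False
    have "s - T \<notin> N2"
      using that image_eqI[of s "(+) T" "s - T" N2] by auto
    then show ?thesis using N2(2) that False by (auto simp: concat_signal_def)
  qed
  moreover have "negligible (N1 \<union> (+) T ` N2)"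
    using N1(1) negligible_translation[OF N2(1)] by auto
  ultimately show ?thesis unfolding ae_eq_upto_def by blast
qed

lemma nonanticipative_strategies_iff:
  "lam \<in> nonanticipative_strategies U D \<longleftrightarrow>
     (\<forall>u\<in>signals U. lam u \<in> signals D) \<and>
     (\<forall>t. \<forall>u\<in>signals U. \<forall>u'\<in>signals U. ae_eq_upto t u u' \<longrightarrow> ae_eq_upto t (lam u) (lam u'))"
proof -
  have "(\<forall>t\<ge>0. P t) \<longleftrightarrow> (\<forall>t. P t)"
    if "\<And>t. t \<le> 0 \<Longrightarrow> P t" for P :: "real \<Rightarrow> bool"
    using that by (meson linorder_le_cases)
  from this[of "\<lambda>t. \<forall>u\<in>signals U. \<forall>u'\<in>signals U. ae_eq_upto t u u' \<longrightarrow> ae_eq_upto t (lam u) (lam u')"]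
  show ?thesis
    unfolding nonanticipative_strategies_def ae_eq_upto_iff_AE[symmetric]
    by (simp add: ae_eq_upto_nonpos)
qed

lemma nonanticipative_strategies_signals:
  "lam \<in> nonanticipative_strategies U D \<Longrightarrow> u \<in> signals U \<Longrightarrow> lam u \<in> signals D"
  unfolding nonanticipative_strategies_iff by blast

lemma nonanticipative_strategiesD:
  "lam \<in> nonanticipative_strategies U D \<Longrightarrow> u \<in> signals U \<Longrightarrow> u' \<in> signals U \<Longrightarrow>
    ae_eq_upto t u u' \<Longrightarrow> ae_eq_upto t (lam u) (lam u')"
  unfolding nonanticipative_strategies_iff by blast

lemma nonanticipative_strategiesI:
  "(\<And>u. u \<in> signals U \<Longrightarrow> lam u \<in> signals D) \<Longrightarrow>
   (\<And>t u u'. u \<in> signals U \<Longrightarrow> u' \<in> signals U \<Longrightarrow> ae_eq_upto t u u' \<Longrightarrow>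
      ae_eq_upto t (lam u) (lam u')) \<Longrightarrow>
   lam \<in> nonanticipative_strategies U D"
  unfolding nonanticipative_strategies_iff by blast

lemma nonanticipative_strategies_nonempty:
  assumes "a \<in> D" shows "nonanticipative_strategies U D \<noteq> {}"
proof -
  have "(\<lambda>u s. a) \<in> nonanticipative_strategies U D"
    by (rule nonanticipative_strategiesI) (auto intro: const_signal assms ae_eq_uptoI)
  then show ?thesis by blast
qed

lemma shift_strategy_nonanticipative:
  assumes lam: "lam \<in> nonanticipative_strategies U D" and u: "u \<in> signals U" and T: "T \<ge> 0"
  shows "(\<lambda>v. shift_signal T (lam (concat_signal T u v))) \<in> nonanticipative_strategies U D"
proof (rule nonanticipative_strategiesI)
  show "shift_signal T (lam (concat_signal T u v)) \<in> signals D" if "v \<in> signals U" for v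
    using that by (intro shift_signal_signals nonanticipative_strategies_signals[OF lam]
        concat_signal_signals u T)
next
  fix t v v' assume v: "v \<in> signals U" "v' \<in> signals U" and vv': "ae_eq_upto t v v'"
  have "ae_eq_upto (T + t) (concat_signal T u v) (concat_signal T u v')"
    by (rule ae_eq_upto_concat) (auto intro: ae_eq_uptoI simp: vv')
  then have "ae_eq_upto (T + t) (lam (concat_signal T u v)) (lam (concat_signal T u v'))"
    by (intro nonanticipative_strategiesD[OF lam] concat_signal_signals u v T)
  then show "ae_eq_upto t (shift_signal T (lam (concat_signal T u v)))
      (shift_signal T (lam (concat_signal T u v')))"
    using T by (rule ae_eq_upto_shift)
qed

lemma glued_strategy_nonanticipative:
  assumes lam: "lam \<in> nonanticipative_strategies U D" and T: "T \<ge> 0"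
    and mu: "\<And>z. mu z \<in> nonanticipative_strategies U D"
    and y: "\<And>u u'. u \<in> signals U \<Longrightarrow> u' \<in> signals U \<Longrightarrow> ae_eq_upto T u u' \<Longrightarrow> y u = y u'"
  shows "(\<lambda>u. concat_signal T (lam u) (mu (y u) (shift_signal T u))) \<in> nonanticipative_strategies U D"
proof (rule nonanticipative_strategiesI)
  show "concat_signal T (lam u) (mu (y u) (shift_signal T u)) \<in> signals D" if "u \<in> signals U" for u
    using that by (intro concat_signal_signals nonanticipative_strategies_signals[OF lam]
        nonanticipative_strategies_signals[OF mu] shift_signal_signals T)
next
  fix t u u' assume u: "u \<in> signals U" "u' \<in> signals U" and uu': "ae_eq_upto t u u'"
  have lam_eq: "ae_eq_upto (min t T) (lam u) (lam u')"
    by (rule nonanticipative_strategiesD[OF lam u ae_eq_upto_mono[OF uu']]) simp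
  show "ae_eq_upto t (concat_signal T (lam u) (mu (y u) (shift_signal T u)))
      (concat_signal T (lam u') (mu (y u') (shift_signal T u')))"
  proof (cases "t \<le> T")
    case True
    then show ?thesis by (intro ae_eq_upto_concat lam_eq ae_eq_upto_nonpos) simp
  next
    case False
    have "y u = y u'" by (rule y[OF u ae_eq_upto_mono[OF uu']]) (use False in simp)
    moreover have "ae_eq_upto (t - T) (shift_signal T u) (shift_signal T u')"
      using uu' T by (intro ae_eq_upto_shift) simp_all
    then have "ae_eq_upto (t - T) (mu z (shift_signal T u)) (mu z (shift_signal T u'))" for z
      by (intro nonanticipative_strategiesD[OF mu] shift_signal_signals u T)
    ultimately show ?thesis by (intro ae_eq_upto_concat lam_eq) simp
  qed
qed

section \<open>Integral solutions of Caratheodory equations\<close>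

lemma has_integral_power_Icc0:
  assumes "t \<ge> 0"
  shows "((\<lambda>s::real. s ^ n) has_integral t ^ Suc n / Suc n) {0..t}"
proof -
  have "((\<lambda>s::real. s ^ n) has_integral ((\<lambda>s. s ^ Suc n / Suc n) t - (\<lambda>s. s ^ Suc n / Suc n) 0)) {0..t}"
  proof (rule fundamental_theorem_of_calculus[OF assms])
    fix s :: real
    show "((\<lambda>s. s ^ Suc n / Suc n) has_vector_derivative s ^ n) (at s within {0..t})"
      unfolding has_real_derivative_iff_has_vector_derivative[symmetric]
      by (rule derivative_eq_intros refl | simp)+
  qed
  then show ?thesis by simp
qed

lemma gronwall_iterate:
  fixes w :: "real \<Rightarrow> real"
  assumes cont: "continuous_on {0..T} w"
    and le: "\<And>t. t \<in> {0..T} \<Longrightarrow> w t \<le> L * integral {0..t} w" and L: "L \<ge> 0"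
    and B: "\<And>t. t \<in> {0..T} \<Longrightarrow> w t \<le> B"
  shows "t \<in> {0..T} \<Longrightarrow> w t \<le> B * (L * t) ^ n / fact n"
proof (induction n arbitrary: t)
  case 0
  then show ?case using B by simp
next
  case (Suc n)
  have sub: "{0..t} \<subseteq> {0..T}" using Suc.prems by auto
  define p where "p = (\<lambda>r. B * L ^ n / fact n * r ^ n)"
  have p_int: "(p has_integral B * L ^ n / fact n * (t ^ Suc n / Suc n)) {0..t}"
    unfolding p_def using has_integral_power_Icc0[of t n] Suc.prems
    by (intro has_integral_mult_right) auto
  have "integral {0..t} w \<le> integral {0..t} p"
  proof (rule integral_le)
    show "w integrable_on {0..t}"
      by (rule integrable_continuous_interval) (rule continuous_on_subset[OF cont sub])
    show "p integrable_on {0..t}" using p_int by blast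
    show "w r \<le> p r" if "r \<in> {0..t}" for r
      using Suc.IH[of r] that sub by (auto simp: p_def power_mult_distrib)
  qed
  also have "\<dots> = B * L ^ n / fact n * (t ^ Suc n / Suc n)"
    using p_int by (rule integral_unique)
  finally have "L * integral {0..t} w \<le> L * (B * L ^ n / fact n * (t ^ Suc n / Suc n))"
    using L by (rule mult_left_mono)
  also have "\<dots> = B * (L * t) ^ Suc n / fact (Suc n)"
    by (simp add: power_mult_distrib field_simps)
  finally show ?case using le[OF Suc.prems] by linarith
qed

lemma gronwall_zero:
  fixes w :: "real \<Rightarrow> real"
  assumes cont: "continuous_on {0..T} w" and nonneg: "\<And>t. t \<in> {0..T} \<Longrightarrow> 0 \<le> w t"
    and le: "\<And>t. t \<in> {0..T} \<Longrightarrow> w t \<le> L * integral {0..t} w" and L: "L \<ge> 0"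
    and t: "t \<in> {0..T}"
  shows "w t = 0"
proof -
  obtain B where B: "\<And>s. s \<in> {0..T} \<Longrightarrow> w s \<le> B"
    using compact_attains_sup[of "w ` {0..T}"] t cont
    by (metis compact_Icc compact_continuous_image empty_iff image_eqI image_is_empty)
  have "(\<lambda>n. B * ((L * t) ^ n / fact n)) \<longlonglongrightarrow> B * 0"
    using summable_LIMSEQ_zero[OF summable_exp[of "L * t"]]
    by (intro tendsto_mult tendsto_const) (simp add: divide_inverse mult.commute)
  moreover have "w t \<le> B * ((L * t) ^ n / fact n)" for n
    using gronwall_iterate[OF cont le L B t] by simp
  ultimately have "w t \<le> 0"
    by (intro LIMSEQ_le_const[where X="\<lambda>n. B * ((L * t) ^ n / fact n)"]) auto
  with nonneg[OF t] show ?thesis by simp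
qed

definition integral_solution :: "(real \<Rightarrow> 'a::euclidean_space \<Rightarrow> 'a) \<Rightarrow> 'a \<Rightarrow> (real \<Rightarrow> 'a) \<Rightarrow> bool" where
  "integral_solution F x \<xi> \<longleftrightarrow>
     (\<forall>t<0. \<xi> t = x) \<and> (\<forall>t\<ge>0. ((\<lambda>s. F s (\<xi> s)) has_integral (\<xi> t - x)) {0..t})"

lemma integral_solution_zero:
  assumes "integral_solution F x \<xi>" shows "\<xi> 0 = x"
proof -
  have "((\<lambda>s. F s (\<xi> s)) has_integral (\<xi> 0 - x)) {0..0}"
    using assms unfolding integral_solution_def by blast
  then have "((\<lambda>s. F s (\<xi> s)) has_integral (\<xi> 0 - x)) {0}"
    by simp
  then have "\<xi> 0 - x = 0"
    using has_integral_refl(2) has_integral_unique by blast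
  then show ?thesis by simp
qed

lemma continuous_on_integral_solution:
  fixes \<xi> :: "real \<Rightarrow> 'a::euclidean_space"
  assumes "\<And>t. t \<in> {0..T} \<Longrightarrow> ((\<lambda>s. F s (\<xi> s)) has_integral (\<xi> t - x)) {0..t}"
  shows "continuous_on {0..T} \<xi>"
proof (cases "T \<ge> 0")
  case True
  have "(\<lambda>s. F s (\<xi> s)) integrable_on {0..T}"
    using True by (intro has_integral_integrable[OF assms]) simp
  then have "continuous_on {0..T} (\<lambda>t. x + integral {0..t} (\<lambda>s. F s (\<xi> s)))"
    by (intro continuous_intros indefinite_integral_continuous_1)
  moreover have "x + integral {0..t} (\<lambda>s. F s (\<xi> s)) = \<xi> t" if "t \<in> {0..T}" for t
    using assms[OF that] by (simp add: integral_unique)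
  ultimately show ?thesis by (rule continuous_on_eq) auto
qed simp

text \<open>The distance of the two solutions satisfies the hypothesis of Gronwall's lemma.\<close>
lemma integral_solutions_eq:
  fixes \<xi> \<eta> :: "real \<Rightarrow> 'a::euclidean_space"
  assumes lip: "\<And>s y z. s \<in> {0..T} \<Longrightarrow> norm (F s y - F s z) \<le> L * norm (y - z)" and L: "L \<ge> 0"
    and N: "negligible N" and FG: "\<And>s y. s \<in> {0..T} - N \<Longrightarrow> F s y = G s y"
    and \<xi>: "\<And>t. t \<in> {0..T} \<Longrightarrow> ((\<lambda>s. F s (\<xi> s)) has_integral (\<xi> t - x)) {0..t}"
    and \<eta>: "\<And>t. t \<in> {0..T} \<Longrightarrow> ((\<lambda>s. G s (\<eta> s)) has_integral (\<eta> t - x)) {0..t}"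
    and t: "t \<in> {0..T}"
  shows "\<xi> t = \<eta> t"
proof -
  define w where "w = (\<lambda>s. norm (\<xi> s - \<eta> s))"
  have w_cont: "continuous_on {0..T} w"
    unfolding w_def
    using continuous_on_integral_solution[where F=F and x=x, OF \<xi>]
      continuous_on_integral_solution[where F=G and x=x, OF \<eta>]
    by (intro continuous_intros)
  have "w t = 0"
  proof (rule gronwall_zero[OF w_cont _ _ L t])
    fix r assume r: "r \<in> {0..T}"
    have sub: "{0..r} \<subseteq> {0..T}" using r by auto
    have "((\<lambda>s. F s (\<eta> s)) has_integral (\<eta> r - x)) {0..r}"
      by (rule has_integral_spike[OF N _ \<eta>[OF r]]) (use sub FG in auto)
    from has_integral_diff[OF \<xi>[OF r] this]
    have diff: "((\<lambda>s. F s (\<xi> s) - F s (\<eta> s)) has_integral (\<xi> r - \<eta> r)) {0..r}"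
      by simp
    have "norm (integral {0..r} (\<lambda>s. F s (\<xi> s) - F s (\<eta> s))) \<le> integral {0..r} (\<lambda>s. L * w s)"
    proof (rule integral_norm_bound_integral)
      show "(\<lambda>s. F s (\<xi> s) - F s (\<eta> s)) integrable_on {0..r}" using diff by blast
      show "(\<lambda>s. L * w s) integrable_on {0..r}"
        by (intro integrable_on_mult_right integrable_continuous_interval continuous_on_subset[OF w_cont sub])
      show "norm (F s (\<xi> s) - F s (\<eta> s)) \<le> L * w s" if "s \<in> {0..r}" for s
        unfolding w_def using that sub by (intro lip) auto
    qed
    then show "w r \<le> L * integral {0..r} w"
      using integral_unique[OF diff] by (simp add: w_def)
  qed (simp add: w_def)
  then show ?thesis by (simp add: w_def)
qed

primrec picard_iterate :: "(real \<Rightarrow> 'a \<Rightarrow> 'a) \<Rightarrow> 'a \<Rightarrow> nat \<Rightarrow> real \<Rightarrow> 'a::euclidean_space" where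
  "picard_iterate F x 0 = (\<lambda>t. x)"
| "picard_iterate F x (Suc n) = (\<lambda>t. x + integral {0..t} (\<lambda>s. F s (picard_iterate F x n s)))"

lemma picard_iterate_neg: "t < 0 \<Longrightarrow> picard_iterate F x n t = x"
  by (cases n) auto

locale caratheodory_rhs =
  fixes F :: "real \<Rightarrow> 'a::euclidean_space \<Rightarrow> 'a" and M L :: real
  assumes bounded: "\<And>s y. s \<ge> 0 \<Longrightarrow> norm (F s y) \<le> M"
    and lipschitz: "\<And>s y z. s \<ge> 0 \<Longrightarrow> norm (F s y - F s z) \<le> L * norm (y - z)"
    and L_nonneg: "L \<ge> 0"
    and measurable: "\<And>t \<xi>. t \<ge> 0 \<Longrightarrow> continuous_on {0..t} \<xi> \<Longrightarrow>
      (\<lambda>s. F s (\<xi> s)) \<in> borel_measurable (lebesgue_on {0..t})"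
begin

lemma M_nonneg: "M \<ge> 0"
  using bounded[of 0] norm_ge_zero order_trans by blast

lemma integrable_on_continuous:
  assumes "t \<ge> 0" "continuous_on {0..t} \<xi>"
  shows "(\<lambda>s. F s (\<xi> s)) integrable_on {0..t}"
  by (rule measurable_bounded_by_integrable_imp_integrable[OF measurable[OF assms], where g="\<lambda>_. M"])
    (use bounded in auto)

lemma picard_iterate_continuous_on: "t \<ge> 0 \<Longrightarrow> continuous_on {0..t} (picard_iterate F x n)"
proof (induction n arbitrary: t)
  case (Suc n)
  then have "(\<lambda>s. F s (picard_iterate F x n s)) integrable_on {0..t}"
    by (intro integrable_on_continuous)
  then show ?case by (simp add: continuous_intros indefinite_integral_continuous_1)
qed simp

lemma integrable_on_picard_iterate:
  "t \<ge> 0 \<Longrightarrow> (\<lambda>s. F s (picard_iterate F x n s)) integrable_on {0..t}"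
  by (intro integrable_on_continuous picard_iterate_continuous_on)

lemma picard_iterate_step_le:
  "t \<ge> 0 \<Longrightarrow>
    norm (picard_iterate F x (Suc n) t - picard_iterate F x n t) \<le> M * L ^ n * t ^ Suc n / fact (Suc n)"
proof (induction n arbitrary: t)
  case 0
  have "norm (integral {0..t} (\<lambda>s. F s x)) \<le> integral {0..t} (\<lambda>s. M)"
    using integrable_on_picard_iterate[OF 0, of x 0] bounded
    by (intro integral_norm_bound_integral) auto
  then show ?case using 0 by (simp add: mult.commute)
next
  case (Suc n)
  let ?p = "picard_iterate F x"
  define c where "c = L * (M * L ^ n / fact (Suc n))"
  have c_int: "((\<lambda>r. c * r ^ Suc n) has_integral c * (t ^ Suc (Suc n) / Suc (Suc n))) {0..t}"
    using has_integral_power_Icc0[OF Suc.prems, of "Suc n"] by (intro has_integral_mult_right)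
  have step: "?p (Suc m) t = x + integral {0..t} (\<lambda>s. F s (?p m s))" for m
    by simp
  have "?p (Suc (Suc n)) t - ?p (Suc n) t =
      integral {0..t} (\<lambda>s. F s (?p (Suc n) s)) - integral {0..t} (\<lambda>s. F s (?p n s))"
    unfolding step[of "Suc n"] step[of n] by simp
  also have "\<dots> = integral {0..t} (\<lambda>s. F s (?p (Suc n) s) - F s (?p n s))"
    by (intro integral_diff[symmetric] integrable_on_picard_iterate Suc.prems)
  also have "norm \<dots> \<le> integral {0..t} (\<lambda>r. c * r ^ Suc n)"
  proof (rule integral_norm_bound_integral)
    show "(\<lambda>s. F s (?p (Suc n) s) - F s (?p n s)) integrable_on {0..t}"
      by (intro integrable_diff integrable_on_picard_iterate Suc.prems)
    show "(\<lambda>r. c * r ^ Suc n) integrable_on {0..t}" using c_int by blast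
    fix s assume s: "s \<in> {0..t}"
    have "norm (F s (?p (Suc n) s) - F s (?p n s)) \<le> L * norm (?p (Suc n) s - ?p n s)"
      using lipschitz s by auto
    also have "\<dots> \<le> L * (M * L ^ n * s ^ Suc n / fact (Suc n))"
      using Suc.IH s L_nonneg by (intro mult_left_mono) auto
    finally show "norm (F s (?p (Suc n) s) - F s (?p n s)) \<le> c * s ^ Suc n"
      by (simp add: c_def field_simps)
  qed
  also have "\<dots> = c * (t ^ Suc (Suc n) / Suc (Suc n))"
    using c_int by (rule integral_unique)
  also have "\<dots> = M * L ^ Suc n * t ^ Suc (Suc n) / fact (Suc (Suc n))"
    by (simp add: c_def field_simps)
  finally show ?case .
qed

lemma picard_iterate_convergent: "convergent (\<lambda>n. picard_iterate F x n t)"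
proof (cases "t \<ge> 0")
  case True
  let ?d = "\<lambda>k. picard_iterate F x (Suc k) t - picard_iterate F x k t"
  have "summable (\<lambda>k. M * t * ((L * t) ^ k / fact k))"
    using summable_exp[of "L * t"] by (intro summable_mult) (simp add: divide_inverse mult.commute)
  then have "summable ?d"
  proof (rule summable_comparison_test'[where N=0])
    fix k :: nat
    have "norm (?d k) \<le> M * L ^ k * t ^ Suc k / fact (Suc k)"
      by (rule picard_iterate_step_le[OF True])
    also have "\<dots> \<le> M * L ^ k * t ^ Suc k / fact k"
      using True M_nonneg L_nonneg by (intro divide_left_mono) (auto intro!: fact_mono)
    also have "\<dots> = M * t * ((L * t) ^ k / fact k)"
      by (simp add: power_mult_distrib)
    finally show "norm (?d k) \<le> M * t * ((L * t) ^ k / fact k)" .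
  qed
  then have "(\<lambda>n. x + (\<Sum>k<n. ?d k)) \<longlonglongrightarrow> x + suminf ?d"
    by (intro tendsto_add tendsto_const summable_LIMSEQ)
  then have "convergent (\<lambda>n. x + (\<Sum>k<n. ?d k))"
    by (rule convergentI)
  moreover have "x + (\<Sum>k<n. ?d k) = picard_iterate F x n t" for n
    using sum_lessThan_telescope[of "\<lambda>k. picard_iterate F x k t" n] by simp
  ultimately show ?thesis by simp
next
  case False
  then show ?thesis by (simp add: picard_iterate_neg convergent_const)
qed

text \<open>The pointwise limit of the Picard iterates is a solution, by dominated convergence.\<close>
lemma integral_solution_exists: "\<exists>\<xi>. integral_solution F x \<xi>"
proof
  let ?p = "picard_iterate F x"
  define \<xi> where "\<xi> = (\<lambda>t. lim (\<lambda>n. ?p n t))"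
  have conv: "(\<lambda>n. ?p n t) \<longlonglongrightarrow> \<xi> t" for t
    unfolding \<xi>_def by (rule convergent_LIMSEQ_iff[THEN iffD1, OF picard_iterate_convergent])
  show "integral_solution F x \<xi>"
    unfolding integral_solution_def
  proof (intro conjI allI impI)
    fix t :: real assume "t < 0"
    then have "(\<lambda>n. ?p n t) \<longlonglongrightarrow> x" by (simp add: picard_iterate_neg)
    then show "\<xi> t = x" using conv[of t] LIMSEQ_unique by blast
  next
    fix t :: real assume t: "t \<ge> 0"
    have lim: "(\<lambda>k. F s (?p k s)) \<longlonglongrightarrow> F s (\<xi> s)" if "s \<in> {0..t}" for s
    proof (rule LIM_zero_cancel, rule Lim_null_comparison)
      show "\<forall>\<^sub>F k in sequentially. norm (F s (?p k s) - F s (\<xi> s)) \<le> L * norm (?p k s - \<xi> s)"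
        using lipschitz that by (intro always_eventually allI) auto
      show "(\<lambda>k. L * norm (?p k s - \<xi> s)) \<longlonglongrightarrow> 0"
        using tendsto_mult_right_zero[OF tendsto_norm_zero[OF LIM_zero[OF conv]]] .
    qed
    have M_int: "(\<lambda>s. M) integrable_on {0..t}" by auto
    have "norm (F s (?p k s)) \<le> M" if "s \<in> {0..t}" for k s
      using bounded that by simp
    note dc = dominated_convergence[of "\<lambda>k s. F s (?p k s)" "{0..t}" "\<lambda>s. M" "\<lambda>s. F s (\<xi> s)",
        OF integrable_on_picard_iterate[OF t] M_int this lim]
    have "(\<lambda>k. ?p (Suc k) t) \<longlonglongrightarrow> x + integral {0..t} (\<lambda>s. F s (\<xi> s))"
      using tendsto_add[OF tendsto_const dc(2), of x] by simp
    then have "\<xi> t = x + integral {0..t} (\<lambda>s. F s (\<xi> s))"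
      using LIMSEQ_unique[OF LIMSEQ_Suc[OF conv[of t]]] by blast
    with dc(1) show "((\<lambda>s. F s (\<xi> s)) has_integral (\<xi> t - x)) {0..t}"
      by (simp add: integrable_integral)
  qed
qed

lemma integral_solution_unique:
  assumes "integral_solution F x \<xi>" "integral_solution F x \<eta>"
  shows "\<xi> = \<eta>"
proof
  fix t :: real
  show "\<xi> t = \<eta> t"
  proof (cases "t < 0")
    case False
    show ?thesis
      by (rule integral_solutions_eq[where F=F and G=F and N="{}" and L=L and T=t and x=x])
        (use assms lipschitz L_nonneg False in \<open>auto simp: integral_solution_def\<close>)
  qed (use assms in \<open>simp add: integral_solution_def\<close>)
qed

end

lemma integral_solution_concat:
  fixes \<xi> \<eta> :: "real \<Rightarrow> 'a::euclidean_space"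
  assumes \<xi>: "integral_solution F x \<xi>" and \<eta>: "integral_solution G (\<xi> T) \<eta>" and T: "T \<ge> 0"
  shows "integral_solution (\<lambda>s y. if s \<le> T then F s y else G (s - T) y) x
    (\<lambda>t. if t \<le> T then \<xi> t else \<eta> (t - T))"
    (is "integral_solution ?H x ?\<zeta>")
proof -
  have \<xi>_int: "((\<lambda>s. F s (\<xi> s)) has_integral (\<xi> t - x)) {0..t}" if "t \<ge> 0" for t
    using \<xi> that unfolding integral_solution_def by blast
  have \<zeta>_int_le: "((\<lambda>s. ?H s (?\<zeta> s)) has_integral (\<xi> t - x)) {0..t}" if "0 \<le> t" "t \<le> T" for t
    by (rule has_integral_eq[OF _ \<xi>_int[OF that(1)]]) (use that in auto)
  have "((\<lambda>s. ?H s (?\<zeta> s)) has_integral (\<eta> (t - T) - \<xi> T)) {T..t}" if "T < t" for t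
  proof -
    have "((\<lambda>r. G r (\<eta> r)) has_integral (\<eta> (t - T) - \<xi> T)) {0..t - T}"
      using \<eta> that unfolding integral_solution_def by auto
    then have shifted: "((\<lambda>s. G (s - T) (\<eta> (s - T))) has_integral (\<eta> (t - T) - \<xi> T)) {T..t}"
      using has_integral_shift_Icc_real[of "\<lambda>s. G (s - T) (\<eta> (s - T))" T _ 0 "t - T"]
      by (simp add: o_def)
    show ?thesis
      by (rule has_integral_spike_finite[where S="{T}", OF _ _ shifted]) auto
  qed
  then have "((\<lambda>s. ?H s (?\<zeta> s)) has_integral (\<xi> T - x) + (\<eta> (t - T) - \<xi> T)) {0..t}" if "T < t" for t
    using that T by (intro has_integral_combine[OF T _ \<zeta>_int_le]) auto
  then show ?thesis
    using \<zeta>_int_le \<xi> T unfolding integral_solution_def by (auto simp: not_le)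
qed

section \<open>Trajectories of the game\<close>

locale bounded_lipschitz_dynamics =
  fixes f :: "'n::euclidean_space \<Rightarrow> 'u::euclidean_space \<Rightarrow> 'd::euclidean_space \<Rightarrow> 'n"
    and U :: "'u set" and D :: "'d set" and M L :: real
  assumes continuous: "continuous_on (UNIV \<times> U \<times> D) (\<lambda>(x, u, d). f x u d)"
    and bounded: "\<And>x u d. u \<in> U \<Longrightarrow> d \<in> D \<Longrightarrow> norm (f x u d) \<le> M"
    and lipschitz: "\<And>x y u d. u \<in> U \<Longrightarrow> d \<in> D \<Longrightarrow> norm (f x u d - f y u d) \<le> L * norm (x - y)"
    and L_nonneg: "L \<ge> 0"
begin

lemma measurable_along_signals:
  assumes u: "u \<in> signals U" and d: "d \<in> signals D" and t: "t \<ge> 0"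
    and \<xi>: "continuous_on {0..t} \<xi>"
  shows "(\<lambda>s. f (\<xi> s) (u s) (d s)) \<in> borel_measurable (lebesgue_on {0..t})"
proof -
  have restrict: "lebesgue_on {0..t} = restrict_space (lebesgue_on {0..}) {0..t}"
    using t by (subst restrict_restrict_space) (auto simp: Int_absorb1)
  have "u \<in> borel_measurable (lebesgue_on {0..t})" "d \<in> borel_measurable (lebesgue_on {0..t})"
    unfolding restrict using u d by (auto intro: measurable_restrict_space1 simp: signals_def)
  moreover have "\<xi> \<in> borel_measurable (lebesgue_on {0..t})"
    by (rule continuous_imp_measurable_on_sets_lebesgue[OF \<xi>]) auto
  ultimately have "(\<lambda>s. (\<xi> s, u s, d s)) \<in> lebesgue_on {0..t} \<rightarrow>\<^sub>M restrict_space borel (UNIV \<times> U \<times> D)"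
    using u d by (intro measurable_restrict_space2 borel_measurable_Pair)
      (auto simp: space_restrict_space signals_memD)
  from measurable_compose[OF this borel_measurable_continuous_on_restrict[OF continuous]]
  show ?thesis by simp
qed

lemma caratheodory_rhs_signals:
  assumes "u \<in> signals U" "d \<in> signals D"
  shows "caratheodory_rhs (\<lambda>s y. f y (u s) (d s)) M L"
  using assms by unfold_locales
    (auto intro: bounded lipschitz L_nonneg measurable_along_signals signals_memD)

lemma traj_eqI:
  assumes u: "u \<in> signals U" and d: "d \<in> signals D"
    and \<xi>: "integral_solution (\<lambda>s y. f y (u s) (d s)) x \<xi>"
  shows "traj f x u d = \<xi>"
proof -
  interpret caratheodory_rhs "\<lambda>s y. f y (u s) (d s)" M L
    by (rule caratheodory_rhs_signals[OF u d])
  have "(THE \<xi>. integral_solution (\<lambda>s y. f y (u s) (d s)) x \<xi>) = \<xi>"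
    using \<xi> integral_solution_unique by blast
  then show ?thesis unfolding traj_def integral_solution_def .
qed

lemma integral_solution_traj:
  assumes u: "u \<in> signals U" and d: "d \<in> signals D"
  shows "integral_solution (\<lambda>s y. f y (u s) (d s)) x (traj f x u d)"
proof -
  interpret caratheodory_rhs "\<lambda>s y. f y (u s) (d s)" M L
    by (rule caratheodory_rhs_signals[OF u d])
  obtain \<xi> where "integral_solution (\<lambda>s y. f y (u s) (d s)) x \<xi>"
    using integral_solution_exists by blast
  with traj_eqI[OF u d this] show ?thesis by simp
qed

lemma traj_has_integral:
  assumes "u \<in> signals U" "d \<in> signals D" "t \<ge> 0"
  shows "((\<lambda>s. f (traj f x u d s) (u s) (d s)) has_integral (traj f x u d t - x)) {0..t}"
  using integral_solution_traj[OF assms(1,2)] assms(3) unfolding integral_solution_def by blast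

lemma traj_zero: "u \<in> signals U \<Longrightarrow> d \<in> signals D \<Longrightarrow> traj f x u d 0 = x"
  by (rule integral_solution_zero[OF integral_solution_traj])

lemma traj_causal:
  assumes u: "u \<in> signals U" "u' \<in> signals U" and d: "d \<in> signals D" "d' \<in> signals D"
    and uu': "ae_eq_upto T u u'" and dd': "ae_eq_upto T d d'" and t: "t \<le> T"
  shows "traj f x u d t = traj f x u' d' t"
proof (cases "t < 0")
  case True
  then show ?thesis
    using integral_solution_traj[OF u(1) d(1)] integral_solution_traj[OF u(2) d(2)]
    by (simp add: integral_solution_def)
next
  case False
  obtain N1 N2 where N: "negligible N1" "negligible N2"
    and eq: "\<forall>s\<in>{0..T} - N1. u s = u' s" "\<forall>s\<in>{0..T} - N2. d s = d' s"
    using uu' dd' unfolding ae_eq_upto_def by blast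
  show ?thesis
  proof (rule integral_solutions_eq[where N="N1 \<union> N2" and L=L and T=T])
    show "norm (f y (u s) (d s) - f z (u s) (d s)) \<le> L * norm (y - z)" if "s \<in> {0..T}" for s y z
      using that u d by (intro lipschitz signals_memD) auto
  qed (use N eq L_nonneg False t traj_has_integral u d in auto)
qed

lemma traj_concat:
  assumes u: "u \<in> signals U" "v \<in> signals U" and d: "d \<in> signals D" "e \<in> signals D"
    and T: "T \<ge> 0"
  shows "traj f x (concat_signal T u v) (concat_signal T d e) =
    (\<lambda>t. if t \<le> T then traj f x u d t else traj f (traj f x u d T) v e (t - T))"
proof (rule traj_eqI)
  show "concat_signal T u v \<in> signals U" "concat_signal T d e \<in> signals D"
    using u d T by (auto intro: concat_signal_signals)
  have "(\<lambda>s y. f y (concat_signal T u v s) (concat_signal T d e s)) =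
      (\<lambda>s y. if s \<le> T then f y (u s) (d s) else f y (v (s - T)) (e (s - T)))"
    by (auto simp: concat_signal_def fun_eq_iff)
  then show "integral_solution (\<lambda>s y. f y (concat_signal T u v s) (concat_signal T d e s)) x
      (\<lambda>t. if t \<le> T then traj f x u d t else traj f (traj f x u d T) v e (t - T))"
    using integral_solution_concat[OF integral_solution_traj[OF u(1) d(1)]
        integral_solution_traj[OF u(2) d(2)] T]
    by simp
qed

lemma traj_concat_shift:
  assumes u: "u \<in> signals U" "v \<in> signals U" and d: "d \<in> signals D" "e \<in> signals D"
    and T: "T \<ge> 0" and r: "r \<ge> 0"
  shows "traj f x (concat_signal T u v) (concat_signal T d e) (T + r) = traj f (traj f x u d T) v e r"
  using r traj_zero[OF u(2) d(2)] by (simp add: traj_concat[OF assms(1-5)])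

lemma traj_strategy_causal:
  assumes lam: "lam \<in> nonanticipative_strategies U D" and u: "u \<in> signals U" "u' \<in> signals U"
    and uu': "ae_eq_upto T u u'" and t: "t \<le> T"
  shows "traj f x u (lam u) t = traj f x u' (lam u') t"
  using nonanticipative_strategiesD[OF lam u uu'] u uu' t
  by (intro traj_causal nonanticipative_strategies_signals[OF lam])

end

section \<open>The discounted reach-avoid payoff\<close>

lemma abs_INF_le:
  fixes g :: "'a \<Rightarrow> real"
  assumes "A \<noteq> {}" "\<And>i. i \<in> A \<Longrightarrow> \<bar>g i\<bar> \<le> K"
  shows "bdd_below (g ` A)" "\<bar>INF i\<in>A. g i\<bar> \<le> K"
proof -
  have lower: "- K \<le> g i" if "i \<in> A" for i
    using assms(2)[OF that] by linarith
  then show bdd: "bdd_below (g ` A)" by (rule bdd_belowI2)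
  obtain i where i: "i \<in> A" using assms(1) by blast
  have "(INF i\<in>A. g i) \<le> g i" by (rule cINF_lower[OF bdd i])
  moreover have "- K \<le> (INF i\<in>A. g i)"
    using assms(1) lower by (rule cINF_greatest)
  ultimately show "\<bar>INF i\<in>A. g i\<bar> \<le> K" using assms(2)[OF i] by (auto simp: abs_le_iff)
qed

lemma abs_SUP_le:
  fixes g :: "'a \<Rightarrow> real"
  assumes "A \<noteq> {}" "\<And>i. i \<in> A \<Longrightarrow> \<bar>g i\<bar> \<le> K"
  shows "bdd_above (g ` A)" "\<bar>SUP i\<in>A. g i\<bar> \<le> K"
proof -
  have upper: "g i \<le> K" if "i \<in> A" for i
    using assms(2)[OF that] by linarith
  then show bdd: "bdd_above (g ` A)" by (rule bdd_aboveI2)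
  obtain i where i: "i \<in> A" using assms(1) by blast
  have "g i \<le> (SUP i\<in>A. g i)" by (rule cSUP_upper[OF i bdd])
  moreover have "(SUP i\<in>A. g i) \<le> K"
    using assms(1) upper by (rule cSUP_least)
  ultimately show "\<bar>SUP i\<in>A. g i\<bar> \<le> K" using assms(2)[OF i] by (auto simp: abs_le_iff)
qed

lemma INF_mono_continuous_comp:
  fixes g :: "real \<Rightarrow> real"
  assumes "mono g" "continuous_on UNIV g" "S \<noteq> {}" "bdd_below (h ` S)"
  shows "g (INF s\<in>S. h s) = (INF s\<in>S. g (h s))"
  using continuous_at_Inf_mono[of g "h ` S"] assms
  by (simp add: image_image continuous_on_imp_continuous_within)

lemma cSUP_mult_left:
  fixes h :: "'a \<Rightarrow> real"
  assumes "a \<ge> 0" "A \<noteq> {}" "bdd_above (h ` A)"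
  shows "(SUP x\<in>A. a * h x) = a * (SUP x\<in>A. h x)"
proof -
  have "mono (\<lambda>z. a * z)" using assms(1) by (simp add: mono_def mult_left_mono)
  moreover have "continuous (at_left (Sup (h ` A))) (\<lambda>z. a * z)"
    by (intro continuous_intros)
  ultimately show ?thesis
    using continuous_at_Sup_mono[of "\<lambda>z. a * z" "h ` A"] assms(2,3) by (simp add: image_image)
qed

lemma abs_exp_discount_le:
  fixes \<gamma> s h K :: real
  assumes "\<gamma> \<ge> 0" "s \<ge> 0" "\<bar>h\<bar> \<le> K"
  shows "\<bar>exp (- \<gamma> * s) * h\<bar> \<le> K"
proof -
  have "\<gamma> * s \<ge> 0" using assms by simp
  then have "exp (- \<gamma> * s) \<le> 1" by simp
  then have "exp (- \<gamma> * s) * \<bar>h\<bar> \<le> \<bar>h\<bar>"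
    by (simp add: mult_left_le_one_le)
  then show ?thesis using assms(3) by (simp add: abs_mult)
qed

lemma ra_payoff_cong:
  assumes "\<And>s. s \<in> {0..t} \<Longrightarrow> \<xi> s = \<eta> s" "t \<ge> 0"
  shows "ra_payoff \<gamma> l c \<xi> t = ra_payoff \<gamma> l c \<eta> t"
proof -
  have "(SUP s\<in>{0..t}. exp (- \<gamma> * s) * c (\<xi> s)) = (SUP s\<in>{0..t}. exp (- \<gamma> * s) * c (\<eta> s))"
    using assms(1) by (intro SUP_cong) simp_all
  then show ?thesis using assms unfolding ra_payoff_def by simp
qed

locale reach_avoid_payoff =
  fixes \<gamma> :: real and l c :: "'n \<Rightarrow> real" and K :: real
  assumes discount_nonneg: "\<gamma> \<ge> 0"
    and l_bounded: "\<And>y. \<bar>l y\<bar> \<le> K" and c_bounded: "\<And>y. \<bar>c y\<bar> \<le> K"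
begin

lemma discounted_c_bounds:
  assumes "t \<ge> 0"
  shows "bdd_above ((\<lambda>s. exp (- \<gamma> * s) * c (\<xi> s)) ` {0..t})"
    and "\<bar>SUP s\<in>{0..t}. exp (- \<gamma> * s) * c (\<xi> s)\<bar> \<le> K"
  using abs_SUP_le[of "{0..t}" "\<lambda>s. exp (- \<gamma> * s) * c (\<xi> s)" K] assms
    abs_exp_discount_le[OF discount_nonneg _ c_bounded]
  by auto

lemma abs_ra_payoff_le: "t \<ge> 0 \<Longrightarrow> \<bar>ra_payoff \<gamma> l c \<xi> t\<bar> \<le> K"
  using abs_exp_discount_le[OF discount_nonneg _ l_bounded, of t] discounted_c_bounds(2)[of t \<xi>]
  unfolding ra_payoff_def by (auto simp: abs_le_iff max_def)

lemma bdd_below_ra_payoff: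
  assumes "S \<subseteq> {0..}" shows "bdd_below (ra_payoff \<gamma> l c \<xi> ` S)"
proof (rule bdd_belowI2)
  show "- K \<le> ra_payoff \<gamma> l c \<xi> t" if "t \<in> S" for t
    using abs_ra_payoff_le[of t \<xi>] that assms by auto
qed

lemma ra_payoff_shift:
  assumes T: "T \<ge> 0" and r: "r \<ge> 0"
  shows "ra_payoff \<gamma> l c \<xi> (T + r) =
    max (exp (- \<gamma> * T) * ra_payoff \<gamma> l c (shift_signal T \<xi>) r)
        (SUP s\<in>{0..T}. exp (- \<gamma> * s) * c (\<xi> s))"
proof -
  define g where "g = (\<lambda>s. exp (- \<gamma> * s) * c (\<xi> s))"
  have discount_add: "exp (- \<gamma> * (T + s)) = exp (- \<gamma> * T) * exp (- \<gamma> * s)" for s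
    by (simp add: distrib_left exp_add[symmetric])
  have bdd: "bdd_above (g ` {0..T + r})"
    unfolding g_def using T r by (intro discounted_c_bounds(1)) auto
  have split: "{0..T + r} = {0..T} \<union> (+) T ` {0..r}"
    using T r by (auto simp: image_iff intro!: bexI[where x="_ - T"])
  have "(SUP s\<in>{0..T + r}. g s) = sup (SUP s\<in>{0..T}. g s) (SUP s\<in>(+) T ` {0..r}. g s)"
    unfolding split
  proof (rule cSUP_union)
    show "bdd_above (g ` {0..T})" "bdd_above (g ` (+) T ` {0..r})"
      using T r by (auto intro!: bdd_above_mono[OF bdd])
  qed (use T r in auto)
  also have "\<dots> = max (SUP s\<in>{0..T}. g s) (SUP s\<in>(+) T ` {0..r}. g s)"
    by (simp add: sup_max)
  also have "(SUP s\<in>(+) T ` {0..r}. g s) =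
      exp (- \<gamma> * T) * (SUP s\<in>{0..r}. exp (- \<gamma> * s) * c (shift_signal T \<xi> s))"
    unfolding image_image g_def shift_signal_def discount_add mult.assoc
    using r by (intro cSUP_mult_left discounted_c_bounds(1)[of r "shift_signal T \<xi>", unfolded shift_signal_def]) auto
  finally show ?thesis
    unfolding ra_payoff_def g_def using discount_add[of r]
    by (simp add: shift_signal_def max_mult_distrib_left max.assoc max.commute max.left_commute)
qed

definition total_payoff :: "(real \<Rightarrow> 'n) \<Rightarrow> real" where
  "total_payoff \<xi> = (INF t\<in>{0..}. ra_payoff \<gamma> l c \<xi> t)"

definition horizon_payoff :: "real \<Rightarrow> (real \<Rightarrow> 'n) \<Rightarrow> real \<Rightarrow> real" where
  "horizon_payoff T \<xi> z =
     min (INF t\<in>{0..T}. ra_payoff \<gamma> l c \<xi> t)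
         (max (exp (- \<gamma> * T) * z) (SUP t\<in>{0..T}. exp (- \<gamma> * t) * c (\<xi> t)))"

lemma abs_total_payoff_le: "\<bar>total_payoff \<xi>\<bar> \<le> K"
  unfolding total_payoff_def by (rule abs_INF_le) (auto intro: abs_ra_payoff_le)

lemma abs_horizon_payoff_le:
  assumes "T \<ge> 0" "\<bar>z\<bar> \<le> K"
  shows "\<bar>horizon_payoff T \<xi> z\<bar> \<le> K"
proof -
  have "\<bar>INF t\<in>{0..T}. ra_payoff \<gamma> l c \<xi> t\<bar> \<le> K"
    using assms(1) by (intro abs_INF_le) (auto intro: abs_ra_payoff_le)
  moreover have "\<bar>exp (- \<gamma> * T) * z\<bar> \<le> K"
    by (rule abs_exp_discount_le[OF discount_nonneg assms])
  ultimately show ?thesis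
    using discounted_c_bounds(2)[OF assms(1), of \<xi>] unfolding horizon_payoff_def
    by (auto simp: abs_le_iff min_def max_def)
qed

lemma horizon_payoff_mono: "mono (horizon_payoff T \<xi>)"
  unfolding horizon_payoff_def by (intro monoI min.mono max.mono mult_left_mono) auto

lemma continuous_on_horizon_payoff: "continuous_on UNIV (horizon_payoff T \<xi>)"
  unfolding horizon_payoff_def by (intro continuous_intros)

lemma horizon_payoff_INF:
  assumes "S \<noteq> {}" "bdd_below (g ` S)"
  shows "horizon_payoff T \<xi> (INF s\<in>S. g s) = (INF s\<in>S. horizon_payoff T \<xi> (g s))"
  by (rule INF_mono_continuous_comp[OF horizon_payoff_mono continuous_on_horizon_payoff assms])

lemma horizon_payoff_diff_le:
  assumes "T \<ge> 0" "\<epsilon> \<ge> 0"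
  shows "horizon_payoff T \<xi> z - \<epsilon> \<le> horizon_payoff T \<xi> (z - \<epsilon>)"
proof -
  have "exp (- \<gamma> * T) \<le> 1"
    using assms discount_nonneg by (simp add: mult_nonneg_nonneg)
  then have "exp (- \<gamma> * T) * z - \<epsilon> \<le> exp (- \<gamma> * T) * (z - \<epsilon>)"
    using assms(2) by (simp add: right_diff_distrib mult_left_le_one_le)
  with assms(2) show ?thesis
    unfolding horizon_payoff_def by (auto simp: min_def max_def)
qed

lemma horizon_payoff_cong:
  assumes "\<And>s. s \<in> {0..T} \<Longrightarrow> \<xi> s = \<eta> s"
  shows "horizon_payoff T \<xi> = horizon_payoff T \<eta>"
proof -
  have "ra_payoff \<gamma> l c \<xi> t = ra_payoff \<gamma> l c \<eta> t" if "t \<in> {0..T}" for t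
    using that assms by (intro ra_payoff_cong) auto
  then have "(INF t\<in>{0..T}. ra_payoff \<gamma> l c \<xi> t) = (INF t\<in>{0..T}. ra_payoff \<gamma> l c \<eta> t)"
    by (rule INF_cong[OF refl])
  moreover have "(SUP t\<in>{0..T}. exp (- \<gamma> * t) * c (\<xi> t)) = (SUP t\<in>{0..T}. exp (- \<gamma> * t) * c (\<eta> t))"
    using assms by (intro SUP_cong) auto
  ultimately show ?thesis
    unfolding horizon_payoff_def by simp
qed

lemma total_payoff_cong:
  assumes "\<And>s. s \<ge> 0 \<Longrightarrow> \<xi> s = \<eta> s"
  shows "total_payoff \<xi> = total_payoff \<eta>"
proof -
  have "ra_payoff \<gamma> l c \<xi> t = ra_payoff \<gamma> l c \<eta> t" if "t \<in> {0..}" for t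
    using that assms by (intro ra_payoff_cong) auto
  then show ?thesis
    unfolding total_payoff_def by (rule INF_cong[OF refl])
qed

text \<open>After time \<open>T\<close> the running payoff is a monotone continuous function of the running payoff
  of the shifted trajectory, hence commutes with the infimum.\<close>
lemma total_payoff_split:
  assumes T: "T \<ge> 0"
  shows "total_payoff \<xi> = horizon_payoff T \<xi> (total_payoff (shift_signal T \<xi>))"
proof -
  let ?P = "ra_payoff \<gamma> l c" and ?\<eta> = "shift_signal T \<xi>"
  let ?C = "SUP s\<in>{0..T}. exp (- \<gamma> * s) * c (\<xi> s)"
  have split: "{0..} = {0..T} \<union> (+) T ` {0..}"
  proof (intro equalityI subsetI)
    fix t :: real assume "t \<in> {0..}"
    then show "t \<in> {0..T} \<union> (+) T ` {0..}"
      using image_eqI[of t "(+) T" "t - T"] by (cases "t \<le> T") auto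
  qed (use T in auto)
  have "total_payoff \<xi> = (INF t\<in>{0..T} \<union> (+) T ` {0..}. ?P \<xi> t)"
    unfolding total_payoff_def using split by (rule arg_cong)
  also have "\<dots> = min (INF t\<in>{0..T}. ?P \<xi> t) (INF t\<in>(+) T ` {0..}. ?P \<xi> t)"
    unfolding inf_min[symmetric]
    by (rule cINF_union) (use T in \<open>auto intro: bdd_below_ra_payoff\<close>)
  also have "(INF t\<in>(+) T ` {0..}. ?P \<xi> t) = (INF r\<in>{0..}. max (exp (- \<gamma> * T) * ?P ?\<eta> r) ?C)"
    unfolding image_image using T by (intro INF_cong ra_payoff_shift) auto
  also have "\<dots> = max (exp (- \<gamma> * T) * total_payoff ?\<eta>) ?C"
  proof -
    have "mono (\<lambda>z. max (exp (- \<gamma> * T) * z) ?C)"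
      by (intro monoI max.mono mult_left_mono) auto
    moreover have "continuous_on UNIV (\<lambda>z. max (exp (- \<gamma> * T) * z) ?C)"
      by (intro continuous_intros)
    ultimately show ?thesis
      unfolding total_payoff_def
      by (rule INF_mono_continuous_comp[symmetric]) (auto intro: bdd_below_ra_payoff)
  qed
  finally show ?thesis
    unfolding horizon_payoff_def .
qed

end

section \<open>The dynamic programming principle\<close>

locale reach_avoid_game =
  bounded_lipschitz_dynamics f U D M L + reach_avoid_payoff \<gamma> l c K
  for f :: "'n::euclidean_space \<Rightarrow> 'u::euclidean_space \<Rightarrow> 'd::euclidean_space \<Rightarrow> 'n"
    and U D M L \<gamma> and l c :: "'n \<Rightarrow> real" and K +
  assumes U_nonempty: "U \<noteq> {}" and D_nonempty: "D \<noteq> {}"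
begin

lemma V_gamma_eq:
  "V_gamma f U D l c \<gamma> x =
    (SUP lam\<in>nonanticipative_strategies U D. INF u\<in>signals U. total_payoff (traj f x u (lam u)))"
  unfolding V_gamma_def total_payoff_def ..

lemma signals_nonempty: "signals U \<noteq> {}"
  using U_nonempty const_signal by blast

lemma strategies_nonempty: "nonanticipative_strategies U D \<noteq> {}"
  using D_nonempty nonanticipative_strategies_nonempty by blast

lemma strategy_payoff_bounds:
  "bdd_below ((\<lambda>u. total_payoff (traj f x u (lam u))) ` signals U)"
  "\<bar>INF u\<in>signals U. total_payoff (traj f x u (lam u))\<bar> \<le> K"
  using abs_INF_le[OF signals_nonempty abs_total_payoff_le] by auto

lemma V_gamma_bounds:
  "bdd_above ((\<lambda>lam. INF u\<in>signals U. total_payoff (traj f x u (lam u))) ` nonanticipative_strategies U D)"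
  "\<bar>V_gamma f U D l c \<gamma> x\<bar> \<le> K"
  using abs_SUP_le[OF strategies_nonempty strategy_payoff_bounds(2)] unfolding V_gamma_eq by auto

lemma total_payoff_traj_concat:
  assumes u: "u \<in> signals U" "v \<in> signals U" and d: "d \<in> signals D" "e \<in> signals D"
    and T: "T \<ge> 0"
  shows "total_payoff (traj f x (concat_signal T u v) (concat_signal T d e)) =
    horizon_payoff T (traj f x u d) (total_payoff (traj f (traj f x u d T) v e))"
proof -
  let ?\<xi> = "traj f x (concat_signal T u v) (concat_signal T d e)"
  have "horizon_payoff T ?\<xi> = horizon_payoff T (traj f x u d)"
    by (rule horizon_payoff_cong) (simp add: traj_concat[OF assms])
  moreover have "total_payoff (shift_signal T ?\<xi>) = total_payoff (traj f (traj f x u d T) v e)"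
    by (rule total_payoff_cong) (simp add: shift_signal_def traj_concat_shift[OF assms])
  ultimately show ?thesis
    using total_payoff_split[OF T, of ?\<xi>] by simp
qed

lemma total_payoff_concat_strategy:
  assumes lam: "lam \<in> nonanticipative_strategies U D" and u: "u \<in> signals U" "v \<in> signals U"
    and T: "T \<ge> 0"
  shows "total_payoff (traj f x (concat_signal T u v) (lam (concat_signal T u v))) =
    horizon_payoff T (traj f x u (lam u))
      (total_payoff (traj f (traj f x u (lam u) T) v (shift_signal T (lam (concat_signal T u v)))))"
proof -
  let ?w = "concat_signal T u v"
  have w: "?w \<in> signals U" by (rule concat_signal_signals[OF u T])
  have "ae_eq_upto T ?w u" by (rule ae_eq_uptoI) (simp add: concat_signal_def)
  then have lam_eq: "ae_eq_upto T (lam ?w) (lam u)"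
    by (rule nonanticipative_strategiesD[OF lam w u(1)])
  have same: "traj f x u (lam ?w) s = traj f x u (lam u) s" if "s \<le> T" for s
    by (rule traj_causal[OF u(1) u(1) nonanticipative_strategies_signals[OF lam w]
        nonanticipative_strategies_signals[OF lam u(1)] _ lam_eq that]) (auto intro: ae_eq_uptoI)
  have "total_payoff (traj f x ?w (concat_signal T (lam ?w) (shift_signal T (lam ?w)))) =
      horizon_payoff T (traj f x u (lam ?w))
        (total_payoff (traj f (traj f x u (lam ?w) T) v (shift_signal T (lam ?w))))"
    by (rule total_payoff_traj_concat[OF u nonanticipative_strategies_signals[OF lam w]
          shift_signal_signals[OF nonanticipative_strategies_signals[OF lam w] T] T])
  also have "horizon_payoff T (traj f x u (lam ?w)) = horizon_payoff T (traj f x u (lam u))"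
    by (rule horizon_payoff_cong) (simp add: same)
  finally show ?thesis using same[of T] by simp
qed

lemma INF_total_payoff_le_horizon_payoff:
  assumes lam: "lam \<in> nonanticipative_strategies U D" and u: "u \<in> signals U" and T: "T \<ge> 0"
  shows "(INF w\<in>signals U. total_payoff (traj f x w (lam w))) \<le>
    horizon_payoff T (traj f x u (lam u)) (V_gamma f U D l c \<gamma> (traj f x u (lam u) T))"
proof -
  define \<mu> where "\<mu> = (\<lambda>v. shift_signal T (lam (concat_signal T u v)))"
  define \<xi> where "\<xi> = traj f x u (lam u)"
  have \<mu>: "\<mu> \<in> nonanticipative_strategies U D"
    unfolding \<mu>_def by (rule shift_strategy_nonanticipative[OF lam u T])
  have "(INF w\<in>signals U. total_payoff (traj f x w (lam w))) \<le>
      (INF v\<in>signals U. total_payoff (traj f x (concat_signal T u v) (lam (concat_signal T u v))))"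
    using u T by (intro cINF_mono signals_nonempty strategy_payoff_bounds(1))
      (auto intro: concat_signal_signals)
  also have "\<dots> = (INF v\<in>signals U. horizon_payoff T \<xi> (total_payoff (traj f (\<xi> T) v (\<mu> v))))"
    unfolding \<xi>_def \<mu>_def using total_payoff_concat_strategy[OF lam u _ T]
    by (rule INF_cong[OF refl])
  also have "\<dots> = horizon_payoff T \<xi> (INF v\<in>signals U. total_payoff (traj f (\<xi> T) v (\<mu> v)))"
    by (rule horizon_payoff_INF[symmetric, OF signals_nonempty strategy_payoff_bounds(1)])
  also have "\<dots> \<le> horizon_payoff T \<xi> (V_gamma f U D l c \<gamma> (\<xi> T))"
    unfolding V_gamma_eq[of "\<xi> T"] using \<mu>
    by (intro monoD[OF horizon_payoff_mono] cSUP_upper V_gamma_bounds(1))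
  finally show ?thesis unfolding \<xi>_def .
qed

lemma horizon_value_bounds:
  assumes "T \<ge> 0"
  shows "bdd_below ((\<lambda>u. horizon_payoff T (traj f x u (lam u))
      (V_gamma f U D l c \<gamma> (traj f x u (lam u) T))) ` signals U)"
    and "\<bar>INF u\<in>signals U. horizon_payoff T (traj f x u (lam u))
      (V_gamma f U D l c \<gamma> (traj f x u (lam u) T))\<bar> \<le> K"
  using abs_INF_le[OF signals_nonempty abs_horizon_payoff_le[OF assms V_gamma_bounds(2)]] by auto

lemma eps_optimal_strategies:
  assumes "\<epsilon> > 0"
  obtains mu where "\<And>z. mu z \<in> nonanticipative_strategies U D"
    and "\<And>z. V_gamma f U D l c \<gamma> z - \<epsilon> < (INF v\<in>signals U. total_payoff (traj f z v (mu z v)))"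
proof -
  have "\<forall>z. \<exists>\<mu>. \<mu> \<in> nonanticipative_strategies U D \<and>
      V_gamma f U D l c \<gamma> z - \<epsilon> < (INF v\<in>signals U. total_payoff (traj f z v (\<mu> v)))"
  proof
    fix z
    show "\<exists>\<mu>. \<mu> \<in> nonanticipative_strategies U D \<and>
        V_gamma f U D l c \<gamma> z - \<epsilon> < (INF v\<in>signals U. total_payoff (traj f z v (\<mu> v)))"
      using assms less_cSUP_iff[OF strategies_nonempty V_gamma_bounds(1)[of z],
          of "V_gamma f U D l c \<gamma> z - \<epsilon>"]
      unfolding V_gamma_eq[of z] by auto
  qed
  from choice[OF this] obtain mu where "\<forall>z. mu z \<in> nonanticipative_strategies U D \<and>
      V_gamma f U D l c \<gamma> z - \<epsilon> < (INF v\<in>signals U. total_payoff (traj f z v (mu z v)))"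
    by blast
  then show ?thesis by (intro that) auto
qed

lemma total_payoff_glued_strategy:
  assumes lam: "lam \<in> nonanticipative_strategies U D" and mu: "\<And>z. mu z \<in> nonanticipative_strategies U D"
    and u: "u \<in> signals U" and T: "T \<ge> 0"
  shows "total_payoff (traj f x u (concat_signal T (lam u) (mu (traj f x u (lam u) T) (shift_signal T u)))) =
    horizon_payoff T (traj f x u (lam u)) (total_payoff (traj f (traj f x u (lam u) T) (shift_signal T u)
      (mu (traj f x u (lam u) T) (shift_signal T u))))"
  using total_payoff_traj_concat[OF u shift_signal_signals[OF u T] nonanticipative_strategies_signals[OF lam u]
      nonanticipative_strategies_signals[OF mu shift_signal_signals[OF u T]] T]
  by simp

lemma INF_horizon_payoff_le_V_gamma:
  assumes lam: "lam \<in> nonanticipative_strategies U D" and T: "T \<ge> 0" and \<epsilon>: "\<epsilon> > 0"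
  shows "(INF u\<in>signals U. horizon_payoff T (traj f x u (lam u))
      (V_gamma f U D l c \<gamma> (traj f x u (lam u) T))) - \<epsilon> \<le> V_gamma f U D l c \<gamma> x"
proof -
  let ?V = "V_gamma f U D l c \<gamma>" and ?H = "\<lambda>u. horizon_payoff T (traj f x u (lam u))"
  obtain mu where mu: "\<And>z. mu z \<in> nonanticipative_strategies U D"
    and mu_opt: "\<And>z. ?V z - \<epsilon> < (INF v\<in>signals U. total_payoff (traj f z v (mu z v)))"
    using eps_optimal_strategies[OF \<epsilon>] by blast
  define lam' where
    "lam' = (\<lambda>u. concat_signal T (lam u) (mu (traj f x u (lam u) T) (shift_signal T u)))"
  have lam': "lam' \<in> nonanticipative_strategies U D"
    unfolding lam'_def
  proof (rule glued_strategy_nonanticipative[OF lam T mu])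
    fix u u' assume "u \<in> signals U" "u' \<in> signals U" "ae_eq_upto T u u'"
    then show "traj f x u (lam u) T = traj f x u' (lam u') T"
      by (rule traj_strategy_causal[OF lam]) simp
  qed
  have "(INF u\<in>signals U. ?H u (?V (traj f x u (lam u) T))) - \<epsilon> \<le>
      total_payoff (traj f x u (lam' u))" if u: "u \<in> signals U" for u
  proof -
    let ?y = "traj f x u (lam u) T" and ?w = "shift_signal T u"
    have "?V ?y - \<epsilon> \<le> total_payoff (traj f ?y ?w (mu ?y ?w))"
      using mu_opt[of ?y] cINF_lower[OF strategy_payoff_bounds(1)[of ?y "mu ?y"] shift_signal_signals[OF u T]]
      by linarith
    then have "?H u (?V ?y - \<epsilon>) \<le> ?H u (total_payoff (traj f ?y ?w (mu ?y ?w)))"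
      by (rule monoD[OF horizon_payoff_mono])
    also have "\<dots> = total_payoff (traj f x u (lam' u))"
      unfolding lam'_def by (rule total_payoff_glued_strategy[OF lam mu u T, symmetric])
    finally have "?H u (?V ?y - \<epsilon>) \<le> total_payoff (traj f x u (lam' u))" .
    moreover have "?H u (?V ?y) - \<epsilon> \<le> ?H u (?V ?y - \<epsilon>)"
      using \<epsilon> by (intro horizon_payoff_diff_le T) simp
    moreover have "(INF u\<in>signals U. ?H u (?V (traj f x u (lam u) T))) \<le> ?H u (?V ?y)"
      by (rule cINF_lower[OF horizon_value_bounds(1)[OF T] u])
    ultimately show ?thesis by linarith
  qed
  then have "(INF u\<in>signals U. ?H u (?V (traj f x u (lam u) T))) - \<epsilon> \<le>
      (INF u\<in>signals U. total_payoff (traj f x u (lam' u)))"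
    by (rule cINF_greatest[OF signals_nonempty])
  also have "\<dots> \<le> ?V x"
    unfolding V_gamma_eq[of x] using lam' by (rule cSUP_upper[OF _ V_gamma_bounds(1)])
  finally show ?thesis .
qed

theorem dynamic_programming:
  assumes T: "T \<ge> 0"
  shows "V_gamma f U D l c \<gamma> x =
    (SUP lam\<in>nonanticipative_strategies U D. INF u\<in>signals U.
       horizon_payoff T (traj f x u (lam u)) (V_gamma f U D l c \<gamma> (traj f x u (lam u) T)))"
    (is "_ = (SUP lam\<in>?\<Lambda>. ?R lam)")
proof (rule antisym)
  show "V_gamma f U D l c \<gamma> x \<le> (SUP lam\<in>?\<Lambda>. ?R lam)"
    unfolding V_gamma_eq[of x]
  proof (rule cSUP_mono[OF strategies_nonempty])
    show "bdd_above (?R ` ?\<Lambda>)"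
      by (rule abs_SUP_le(1)[OF strategies_nonempty horizon_value_bounds(2)[OF T]])
    fix lam assume lam: "lam \<in> ?\<Lambda>"
    have "(INF u\<in>signals U. total_payoff (traj f x u (lam u))) \<le> ?R lam"
    proof (rule cINF_greatest[OF signals_nonempty])
      fix u assume "u \<in> signals U"
      then show "(INF u\<in>signals U. total_payoff (traj f x u (lam u))) \<le>
          horizon_payoff T (traj f x u (lam u)) (V_gamma f U D l c \<gamma> (traj f x u (lam u) T))"
        by (rule INF_total_payoff_le_horizon_payoff[OF lam _ T])
    qed
    then show "\<exists>lam'\<in>?\<Lambda>. (INF u\<in>signals U. total_payoff (traj f x u (lam u))) \<le> ?R lam'"
      using lam by blast
  qed
  show "(SUP lam\<in>?\<Lambda>. ?R lam) \<le> V_gamma f U D l c \<gamma> x"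
  proof (rule cSUP_least[OF strategies_nonempty])
    fix lam assume lam: "lam \<in> ?\<Lambda>"
    show "?R lam \<le> V_gamma f U D l c \<gamma> x"
    proof (rule field_le_epsilon)
      fix \<epsilon> :: real assume "\<epsilon> > 0"
      from INF_horizon_payoff_le_V_gamma[where x=x, OF lam T this]
      show "?R lam \<le> V_gamma f U D l c \<gamma> x + \<epsilon>" by linarith
    qed
  qed
qed

end

lemma ex_reach_avoid_game:
  fixes f :: "'n::euclidean_space \<Rightarrow> 'u::euclidean_space \<Rightarrow> 'd::euclidean_space \<Rightarrow> 'n"
  assumes "U \<noteq> {}" "D \<noteq> {}"
    and f_uc: "uniformly_continuous_on (UNIV \<times> U \<times> D) (\<lambda>(x, u, d). f x u d)"
    and f_bdd: "bounded ((\<lambda>(x, u, d). f x u d) ` (UNIV \<times> U \<times> D))"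
    and f_lip: "\<exists>L. \<forall>x y u d. u \<in> U \<longrightarrow> d \<in> D \<longrightarrow> norm (f x u d - f y u d) \<le> L * dist x y"
    and l_bdd: "bounded (range l)" and c_bdd: "bounded (range c)" and "\<gamma> \<ge> 0"
  shows "\<exists>M L K. reach_avoid_game f U D M L \<gamma> l c K"
proof -
  obtain M where M: "\<And>z. z \<in> (\<lambda>(x, u, d). f x u d) ` (UNIV \<times> U \<times> D) \<Longrightarrow> norm z \<le> M"
    using f_bdd unfolding bounded_iff by blast
  obtain L where L: "\<And>x y u d. u \<in> U \<Longrightarrow> d \<in> D \<Longrightarrow> norm (f x u d - f y u d) \<le> L * dist x y"
    using f_lip by blast
  obtain Kl Kc where "\<And>y. \<bar>l y\<bar> \<le> Kl" "\<And>y. \<bar>c y\<bar> \<le> Kc"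
    using l_bdd c_bdd unfolding bounded_iff by (metis rangeI real_norm_def)
  then have "\<And>y. \<bar>l y\<bar> \<le> max Kl Kc" "\<And>y. \<bar>c y\<bar> \<le> max Kl Kc"
    by (meson max.coboundedI1 max.coboundedI2)+
  moreover have "norm (f x u d - f y u d) \<le> max L 0 * norm (x - y)" if "u \<in> U" "d \<in> D" for x y u d
    using L[OF that, of x y] by (simp add: dist_norm) (meson max.cobounded1 mult_right_mono norm_ge_zero order_trans)
  moreover have "norm (f x u d) \<le> M" if "u \<in> U" "d \<in> D" for x u d
    using that by (intro M image_eqI[where x="(x, u, d)"]) auto
  ultimately have "reach_avoid_game f U D M (max L 0) \<gamma> l c (max Kl Kc)"
    using assms uniformly_continuous_imp_continuous[OF f_uc] by unfold_locales auto
  then show ?thesis by blast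
qed

theorem mainTheorem3:
  fixes f :: "'n::euclidean_space \<Rightarrow> 'u::euclidean_space \<Rightarrow> 'd::euclidean_space \<Rightarrow> 'n"
    and U :: "'u set" and D :: "'d set"
    and l c :: "'n \<Rightarrow> real" and \<gamma> :: real
  assumes U: "compact U" "convex U" "U \<noteq> {}"
    and D: "compact D" "convex D" "D \<noteq> {}"
    and f_uc: "uniformly_continuous_on (UNIV \<times> U \<times> D) (\<lambda>(x, u, d). f x u d)"
    and f_bdd: "bounded ((\<lambda>(x, u, d). f x u d) ` (UNIV \<times> U \<times> D))"
    and f_lip: "\<exists>L. \<forall>x y u d. u \<in> U \<longrightarrow> d \<in> D \<longrightarrow> norm (f x u d - f y u d) \<le> L * dist x y"
    and l_bdd: "bounded (range l)" and l_lip: "\<exists>L. L-lipschitz_on UNIV l"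
    and c_bdd: "bounded (range c)" and c_lip: "\<exists>L. L-lipschitz_on UNIV c"
    and \<gamma>: "\<gamma> > 0"
  shows "\<forall>x T. T > 0 \<longrightarrow>
    V_gamma f U D l c \<gamma> x =
      (SUP lam\<in>nonanticipative_strategies U D. INF u\<in>signals U.
         min (INF t\<in>{0..T}. ra_payoff \<gamma> l c (traj f x u (lam u)) t)
             (max (exp (- \<gamma> * T) * V_gamma f U D l c \<gamma> (traj f x u (lam u) T))
                  (SUP t\<in>{0..T}. exp (- \<gamma> * t) * c (traj f x u (lam u) t))))"
proof -
  obtain M L K where "reach_avoid_game f U D M L \<gamma> l c K"
    using ex_reach_avoid_game[OF U(3) D(3) f_uc f_bdd f_lip l_bdd c_bdd] \<gamma> by fastforce
  then interpret reach_avoid_game f U D M L \<gamma> l c K .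
  show ?thesis
    using dynamic_programming unfolding horizon_payoff_def by simp
qed

end
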